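(* Let $\mathcal M,\mathcal X,\mathcal Y$ be finite sets, $P_M$ a distribution on $\mathcal M$, $W_{Y|X}$ a channel from $\mathcal X$ to $\mathcal Y$, and $P_X$ any distribution on $\mathcal X$. For every $s\in(0,\tfrac12]$, \[ P_{js}(P_M,W_{Y|X})\le e^{\frac{s}{1-s}\left(H_{1-s}(M)-I^{\uparrow}_{1-s}(X;Y|P_X\times W_{Y|X})\right)} =\Big(\sum_m P_M(m)^{1-s}\Big)^{\frac1{1-s}}\sum_y\Big(\sum_x P_X(x)W_{Y|X}(y|x)^{1-s}\Big)^{\frac1{1-s}}. \]
   Context: A code $\phi=(\mathsf e,\mathsf d)$ consists of $\mathsf e:\mathcal M\to\mathcal X$ and $\mathsf d:\mathcal Y\to\mathcal M$; $P_{js}[\phi|P_M,W_{Y|X}]:=\sum_{m}P_M(m)W_{Y|X}(\{y:\mathsf d(y)\ne m\}|\mathsf e(m))$ and $P_{js}(P_M,W_{Y|X}):=\inf_\phi P_{js}[\phi|P_M,W_{Y|X}]$. $H_{1-s}(M):=\frac1s\log\sum_m P_M(m)^{1-s}$. For $P_{XY}=P_X\times W_{Y|X}$, $I^{\uparrow}_{1-s}(X;Y|P_{XY}):=-\frac{1-s}{s}\log\sum_y\big(\sum_x P_X(x)W_{Y|X}(y|x)^{1-s}\big)^{\frac1{1-s}}$. *)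

theory Defs
  imports "HOL-Analysis.Analysis"
begin

definition is_dist :: "('a::finite \<Rightarrow> real) \<Rightarrow> bool" where
  "is_dist P \<longleftrightarrow> (\<forall>a. 0 \<le> P a) \<and> (\<Sum>a\<in>UNIV. P a) = 1"

definition is_channel :: "('x::finite \<Rightarrow> 'y::finite \<Rightarrow> real) \<Rightarrow> bool" where
  "is_channel W \<longleftrightarrow> (\<forall>x. is_dist (W x))"

definition err_prob :: "('m::finite \<Rightarrow> real) \<Rightarrow> ('x::finite \<Rightarrow> 'y::finite \<Rightarrow> real)
    \<Rightarrow> ('m \<Rightarrow> 'x) \<Rightarrow> ('y \<Rightarrow> 'm) \<Rightarrow> real" where
  "err_prob PM W e d = (\<Sum>m\<in>UNIV. PM m * (\<Sum>y\<in>{y. d y \<noteq> m}. W (e m) y))"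

definition P_js :: "('m::finite \<Rightarrow> real) \<Rightarrow> ('x::finite \<Rightarrow> 'y::finite \<Rightarrow> real) \<Rightarrow> real" where
  "P_js PM W = (INF ed \<in> (UNIV :: (('m \<Rightarrow> 'x) \<times> ('y \<Rightarrow> 'm)) set). err_prob PM W (fst ed) (snd ed))"

definition H_renyi :: "real \<Rightarrow> ('m::finite \<Rightarrow> real) \<Rightarrow> real" where
  "H_renyi s PM = (1 / s) * ln (\<Sum>m\<in>UNIV. PM m powr (1 - s))"

definition I_up :: "real \<Rightarrow> ('x::finite \<Rightarrow> real) \<Rightarrow> ('x \<Rightarrow> 'y::finite \<Rightarrow> real) \<Rightarrow> real" where
  "I_up s PX W = - ((1 - s) / s) *
     ln (\<Sum>y\<in>UNIV. (\<Sum>x\<in>UNIV. PX x * W x y powr (1 - s)) powr (1 / (1 - s)))"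

end

theory Submission
  imports Defs "HOL-Probability.Product_PMF"
begin

text \<open>Gallager's random-coding argument with \<rho> = s/(1-s) \<in> (0,1]. Draw the codewords i.i.d. from
  P_X and decode by maximising q_m(y) = P_M(m) W(y|e(m)). If m is decoded wrongly at y, some other
  message has weight at least q_m(y), so q_m \<le> q_m^{1/(1+\<rho>)} (\<Sum>_{m'\<noteq>m} q_{m'}^{1/(1+\<rho>)})^\<rho>.
  Averaged over the code, the codeword of m is independent of the others, and Jensen's inequality
  for the concave map t \<mapsto> t^\<rho> (this needs \<rho> \<le> 1, i.e. s \<le> 1/2) moves the expectation
  inside the power; the sum over m and y then factorises into the Renyi and Gallager terms.\<close>

lemma sum_weighted_powr_le_powr_sum_weighted:
  fixes w g :: "'a \<Rightarrow> real"
  assumes S: "finite S" and w: "\<And>i. i \<in> S \<Longrightarrow> 0 \<le> w i" and ws: "sum w S = 1"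
    and g: "\<And>i. i \<in> S \<Longrightarrow> 0 \<le> g i" and r: "0 < r" "r \<le> 1"
  shows "(\<Sum>i\<in>S. w i * g i powr r) \<le> (\<Sum>i\<in>S. w i * g i) powr r"
proof (cases "(\<Sum>i\<in>S. w i * g i) = 0")
  case True
  then have "\<And>i. i \<in> S \<Longrightarrow> w i * g i = 0"
    using sum_nonneg_eq_0_iff[OF S, of "\<lambda>i. w i * g i"] w g by auto
  then have "(\<Sum>i\<in>S. w i * g i powr r) = 0" by (intro sum.neutral) auto
  then show ?thesis using True by simp
next
  case False
  define c where "c = (\<Sum>i\<in>S. w i * g i)"
  have "c \<ge> 0" unfolding c_def by (intro sum_nonneg mult_nonneg_nonneg w g)
  then have c0: "c > 0" using False unfolding c_def by linarith
  text \<open>Jensen via the tangent line of t^r at the mean c, in the form of Young's inequality.\<close>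
  have young: "g i powr r * c powr (1 - r) \<le> r * g i + (1 - r) * c" if "i \<in> S" for i
    using Youngs_inequality_0[of r "1 - r" "g i" c] r c0 g[OF that]
    by (cases "g i = 0") auto
  have "(\<Sum>i\<in>S. w i * g i powr r) * c powr (1 - r) = (\<Sum>i\<in>S. w i * (g i powr r * c powr (1 - r)))"
    by (simp add: sum_distrib_right mult.assoc)
  also have "\<dots> \<le> (\<Sum>i\<in>S. w i * (r * g i + (1 - r) * c))"
    by (intro sum_mono mult_left_mono young w)
  also have "\<dots> = r * (\<Sum>i\<in>S. w i * g i) + (1 - r) * c * sum w S"
    by (simp add: distrib_left sum.distrib sum_distrib_left mult_ac)
  also have "\<dots> = c powr r * c powr (1 - r)"
    using c0 ws unfolding c_def[symmetric] by (simp add: powr_add[symmetric] algebra_simps)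
  finally show ?thesis
    using c0 unfolding c_def by (simp add: mult_le_cancel_right)
qed

lemma sum_pmf_UNIV: "(\<Sum>x\<in>(UNIV::'a::finite set). pmf p x) = 1"
  by (rule sum_pmf_eq_1) auto

lemma expectation_finite_pmf:
  fixes f :: "'a::finite \<Rightarrow> real"
  shows "measure_pmf.expectation p f = (\<Sum>x\<in>UNIV. pmf p x * f x)"
  by (subst integral_measure_pmf_real[where A=UNIV]) (auto simp: mult.commute)

lemma le_sum_pmf_weighted:
  fixes f :: "'a::finite \<Rightarrow> real"
  assumes "\<And>a. c \<le> f a"
  shows "c \<le> (\<Sum>a\<in>UNIV. pmf p a * f a)"
proof -
  have "c = (\<Sum>a\<in>UNIV. pmf p a * c)" by (simp add: sum_distrib_right[symmetric] sum_pmf_UNIV)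
  also have "\<dots> \<le> (\<Sum>a\<in>UNIV. pmf p a * f a)" by (intro sum_mono mult_left_mono assms) auto
  finally show ?thesis .
qed

lemma pmf_embed_pmf_is_dist:
  fixes P :: "'a::finite \<Rightarrow> real"
  assumes "is_dist P"
  shows "pmf (embed_pmf P) = P"
proof -
  have nn: "\<And>x. 0 \<le> P x" and "(\<Sum>x\<in>UNIV. P x) = 1" using assms by (auto simp: is_dist_def)
  then have "(\<integral>\<^sup>+x. ennreal (P x) \<partial>count_space UNIV) = 1"
    by (simp add: nn_integral_count_space_finite)
  then show ?thesis using nn by (intro ext pmf_embed_pmf) auto
qed

lemma is_dist_ex_pos:
  fixes P :: "'a::finite \<Rightarrow> real"
  assumes "is_dist P"
  obtains a where "0 < P a"
  using assms unfolding is_dist_def by (metis less_eq_real_def sum.neutral zero_neq_one)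

text \<open>The coordinate m of an i.i.d. vector is independent of the others, and Jensen's
  inequality applies to the expectation over the remaining coordinates.\<close>

lemma expectation_Pi_pmf_mult_powr_sum_le:
  fixes p :: "'x::finite pmf" and m :: "'m::finite" and a :: "'x \<Rightarrow> real"
    and b :: "'m \<Rightarrow> 'x \<Rightarrow> real"
  assumes a: "\<And>x. 0 \<le> a x" and b: "\<And>m x. 0 \<le> b m x" and r: "0 < r" "r \<le> 1"
  shows "(\<Sum>e\<in>UNIV. pmf (Pi_pmf UNIV dflt (\<lambda>_. p)) e * (a (e m) * (\<Sum>m'\<in>-{m}. b m' (e m')) powr r))
     \<le> (\<Sum>x\<in>UNIV. pmf p x * a x) * (\<Sum>m'\<in>-{m}. \<Sum>x\<in>UNIV. pmf p x * b m' x) powr r"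
proof -
  define Q' where "Q' = Pi_pmf (-{m}) dflt (\<lambda>_. p)"
  define G where "G = (\<lambda>f::'m\<Rightarrow>'x. (\<Sum>m'\<in>-{m}. b m' (f m')) powr r)"
  have U: "(UNIV::'m set) = insert m (-{m})" by auto
  have split: "Pi_pmf UNIV dflt (\<lambda>_. p) = map_pmf (\<lambda>(y,f). f(m:=y)) (pair_pmf p Q')"
    unfolding Q'_def by (subst U, rule Pi_pmf_insert) auto
  have "(\<Sum>e\<in>UNIV. pmf (Pi_pmf UNIV dflt (\<lambda>_. p)) e * (a (e m) * G e))
      = measure_pmf.expectation (pair_pmf p Q') (\<lambda>z. a (fst z) * G (snd z))"
    unfolding expectation_finite_pmf[symmetric] split integral_map_pmf
    by (rule Bochner_Integration.integral_cong) (auto simp: G_def)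
  also have "\<dots> = (\<Sum>z\<in>UNIV. pmf p (fst z) * pmf Q' (snd z) * (a (fst z) * G (snd z)))"
    unfolding expectation_finite_pmf by (intro sum.cong refl) (metis pmf_pair prod.collapse)
  also have "\<dots> = (\<Sum>y\<in>UNIV. \<Sum>f\<in>UNIV. pmf p y * pmf Q' f * (a y * G f))"
    unfolding UNIV_Times_UNIV[symmetric] sum.cartesian_product by (simp add: case_prod_beta)
  also have "\<dots> = (\<Sum>y\<in>UNIV. pmf p y * a y) * (\<Sum>f\<in>UNIV. pmf Q' f * G f)"
    by (simp add: sum_product mult_ac)
  also have "\<dots> \<le> (\<Sum>y\<in>UNIV. pmf p y * a y) * (\<Sum>f\<in>UNIV. pmf Q' f * (\<Sum>m'\<in>-{m}. b m' (f m'))) powr r"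
    unfolding G_def
    by (intro mult_left_mono sum_weighted_powr_le_powr_sum_weighted sum_nonneg mult_nonneg_nonneg a b r)
      (auto simp: sum_pmf_UNIV)
  also have "(\<Sum>f\<in>UNIV. pmf Q' f * (\<Sum>m'\<in>-{m}. b m' (f m')))
      = (\<Sum>m'\<in>-{m}. \<Sum>f\<in>UNIV. pmf Q' f * b m' (f m'))"
    by (simp add: sum_distrib_left sum.swap[of _ UNIV])
  also have "\<dots> = (\<Sum>m'\<in>-{m}. measure_pmf.expectation Q' (\<lambda>f. b m' (f m')))"
    by (simp add: expectation_finite_pmf)
  also have "\<dots> = (\<Sum>m'\<in>-{m}. measure_pmf.expectation (map_pmf (\<lambda>f. f m') Q') (b m'))"
    by simp
  also have "\<dots> = (\<Sum>m'\<in>-{m}. \<Sum>x\<in>UNIV. pmf p x * b m' x)"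
    by (intro sum.cong refl) (simp add: Q'_def Pi_pmf_component expectation_finite_pmf)
  finally show ?thesis unfolding G_def .
qed

definition gallager_term :: "real \<Rightarrow> real \<Rightarrow> ('m::finite \<Rightarrow> real) \<Rightarrow> 'm \<Rightarrow> real" where
  "gallager_term lam r q m = q m powr lam * (\<Sum>m'\<in>-{m}. q m' powr lam) powr r"

lemma le_gallager_term:
  fixes q :: "'m::finite \<Rightarrow> real"
  assumes q: "\<And>m. 0 \<le> q m" and max: "\<And>m'. q m' \<le> q D" and "m \<noteq> D"
    and lam: "0 \<le> lam" and r: "0 \<le> r" and lam_r: "lam * (1 + r) = 1"
  shows "q m \<le> gallager_term lam r q m"
proof -
  have "q m powr lam \<le> q D powr lam" using max q lam by (intro powr_mono2) auto
  also have "\<dots> \<le> (\<Sum>m'\<in>-{m}. q m' powr lam)" using \<open>m \<noteq> D\<close> by (intro member_le_sum) auto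
  finally have le: "(q m powr lam) powr r \<le> (\<Sum>m'\<in>-{m}. q m' powr lam) powr r"
    using r by (intro powr_mono2) auto
  have "q m = q m powr lam * (q m powr lam) powr r"
    using lam_r q[of m] by (simp add: powr_powr powr_add[symmetric] distrib_left)
  also have "\<dots> \<le> q m powr lam * (\<Sum>m'\<in>-{m}. q m' powr lam) powr r"
    using le by (rule mult_left_mono) simp
  finally show ?thesis unfolding gallager_term_def .
qed

lemma ex_maximizing_decoder:
  fixes f :: "'m::finite \<Rightarrow> 'y \<Rightarrow> 'a::linorder"
  obtains d where "\<And>m y. f m y \<le> f (d y) y"
proof -
  have "\<forall>y. \<exists>m1. \<forall>m. f m y \<le> f m1 y"
  proof
    fix y
    have "Max (range (\<lambda>m. f m y)) \<in> range (\<lambda>m. f m y)" by (rule Max_in) auto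
    then obtain m1 where m1: "Max (range (\<lambda>m. f m y)) = f m1 y" by blast
    have "f m y \<le> Max (range (\<lambda>m. f m y))" for m by (rule Max_ge) auto
    then show "\<exists>m1. \<forall>m. f m y \<le> f m1 y" unfolding m1 by blast
  qed
  then obtain d where "\<forall>y m. f m y \<le> f (d y) y" by (metis choice)
  with that show ?thesis by blast
qed

lemma P_js_le_err_prob:
  fixes PM :: "'m::finite \<Rightarrow> real" and W :: "'x::finite \<Rightarrow> 'y::finite \<Rightarrow> real"
  shows "P_js PM W \<le> err_prob PM W e d"
  unfolding P_js_def
  by (rule cINF_lower2[where x = "(e, d)"]) (auto intro: bdd_belowI2 finite_imageI)

lemma P_js_le_sum_gallager_term:
  fixes PM :: "'m::finite \<Rightarrow> real" and W :: "'x::finite \<Rightarrow> 'y::finite \<Rightarrow> real"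
  assumes "\<And>m. 0 \<le> PM m" and "\<And>x y. 0 \<le> W x y"
    and "0 \<le> lam" "0 \<le> r" "lam * (1 + r) = 1"
  shows "P_js PM W \<le> (\<Sum>m\<in>UNIV. \<Sum>y\<in>UNIV. gallager_term lam r (\<lambda>m. PM m * W (e m) y) m)"
proof -
  define q where "q = (\<lambda>y m. PM m * W (e m) y)"
  obtain d where d: "\<And>m y. q y m \<le> q y (d y)"
    using ex_maximizing_decoder[of "\<lambda>m y. q y m"] by blast
  have "P_js PM W \<le> err_prob PM W e d" by (rule P_js_le_err_prob)
  also have "\<dots> = (\<Sum>m\<in>UNIV. \<Sum>y\<in>{y. d y \<noteq> m}. q y m)"
    unfolding err_prob_def q_def by (simp add: sum_distrib_left)
  also have "\<dots> \<le> (\<Sum>m\<in>UNIV. \<Sum>y\<in>{y. d y \<noteq> m}. gallager_term lam r (q y) m)"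
  proof (intro sum_mono)
    fix m y assume "y \<in> {y. d y \<noteq> m}"
    then show "q y m \<le> gallager_term lam r (q y) m"
      using assms by (intro le_gallager_term[where D = "d y"] d) (auto simp: q_def)
  qed
  also have "\<dots> \<le> (\<Sum>m\<in>UNIV. \<Sum>y\<in>UNIV. gallager_term lam r (q y) m)"
    by (intro sum_mono sum_mono2) (auto simp: gallager_term_def)
  finally show ?thesis unfolding q_def .
qed

lemma expectation_gallager_term_le:
  fixes PM :: "'m::finite \<Rightarrow> real" and W :: "'x::finite \<Rightarrow> 'y \<Rightarrow> real" and p :: "'x pmf"
    and y :: 'y and lam r :: real
  assumes PM: "\<And>m. 0 \<le> PM m" and W: "\<And>x y. 0 \<le> W x y" and r: "0 < r" "r \<le> 1"
  defines "c \<equiv> (\<Sum>x\<in>UNIV. pmf p x * W x y powr lam)"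
  shows "(\<Sum>e\<in>UNIV. pmf (Pi_pmf UNIV dflt (\<lambda>_. p)) e * gallager_term lam r (\<lambda>m. PM m * W (e m) y) m)
    \<le> PM m powr lam * (c * ((\<Sum>m'\<in>UNIV. PM m' powr lam) * c) powr r)"
proof -
  have c: "0 \<le> c" unfolding c_def by (intro sum_nonneg mult_nonneg_nonneg) auto
  have "(\<Sum>e\<in>UNIV. pmf (Pi_pmf UNIV dflt (\<lambda>_. p)) e * gallager_term lam r (\<lambda>m. PM m * W (e m) y) m)
      = PM m powr lam * (\<Sum>e\<in>UNIV. pmf (Pi_pmf UNIV dflt (\<lambda>_. p)) e * (W (e m) y powr lam
          * (\<Sum>m'\<in>-{m}. PM m' powr lam * W (e m') y powr lam) powr r))"
    unfolding gallager_term_def using PM W by (simp add: powr_mult sum_distrib_left mult_ac)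
  also have "\<dots> \<le> PM m powr lam * (c *
      (\<Sum>m'\<in>-{m}. \<Sum>x\<in>UNIV. pmf p x * (PM m' powr lam * W x y powr lam)) powr r)"
    unfolding c_def by (intro mult_left_mono expectation_Pi_pmf_mult_powr_sum_le r) auto
  also have "(\<Sum>m'\<in>-{m}. \<Sum>x\<in>UNIV. pmf p x * (PM m' powr lam * W x y powr lam))
      = (\<Sum>m'\<in>-{m}. PM m' powr lam) * c"
    unfolding c_def sum_distrib_right by (simp add: sum_distrib_left mult_ac)
  also have "PM m powr lam * (c * ((\<Sum>m'\<in>-{m}. PM m' powr lam) * c) powr r)
      \<le> PM m powr lam * (c * ((\<Sum>m'\<in>UNIV. PM m' powr lam) * c) powr r)"
    using r c by (intro mult_left_mono powr_mono2 mult_right_mono sum_mono2 sum_nonneg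
        mult_nonneg_nonneg) auto
  finally show ?thesis .
qed

lemma P_js_le_gallager_bound:
  fixes PM :: "'m::finite \<Rightarrow> real" and W :: "'x::finite \<Rightarrow> 'y::finite \<Rightarrow> real"
    and PX :: "'x \<Rightarrow> real"
  assumes PM: "is_dist PM" and W: "is_channel W" and PX: "is_dist PX" and \<rho>: "0 < \<rho>" "\<rho> \<le> 1"
  shows "P_js PM W \<le> (\<Sum>m\<in>UNIV. PM m powr (1 / (1 + \<rho>))) powr (1 + \<rho>)
           * (\<Sum>y\<in>UNIV. (\<Sum>x\<in>UNIV. PX x * W x y powr (1 / (1 + \<rho>))) powr (1 + \<rho>))"
proof -
  define lam where "lam = 1 / (1 + \<rho>)"
  define A where "A = (\<Sum>m\<in>UNIV. PM m powr lam)"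
  define c where "c y = (\<Sum>x\<in>UNIV. PX x * W x y powr lam)" for y
  define Q where "Q = Pi_pmf (UNIV::'m set) undefined (\<lambda>_. embed_pmf PX)"
  have PM0: "\<And>m. 0 \<le> PM m" and W0: "\<And>x y. 0 \<le> W x y" and PX0: "\<And>x. 0 \<le> PX x"
    using PM W PX by (auto simp: is_dist_def is_channel_def)
  have lam: "0 \<le> lam" "lam * (1 + \<rho>) = 1" using \<rho> by (auto simp: lam_def)
  have A: "0 \<le> A" and c: "\<And>y. 0 \<le> c y"
    unfolding A_def c_def using PX0 by (auto intro!: sum_nonneg)
  have "P_js PM W \<le> (\<Sum>e\<in>UNIV. pmf Q e *
      (\<Sum>m\<in>UNIV. \<Sum>y\<in>UNIV. gallager_term lam \<rho> (\<lambda>m. PM m * W (e m) y) m))"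
    using PM0 W0 lam \<rho> by (intro le_sum_pmf_weighted P_js_le_sum_gallager_term) auto
  also have "\<dots> = (\<Sum>m\<in>UNIV. \<Sum>y\<in>UNIV. \<Sum>e\<in>UNIV.
      pmf Q e * gallager_term lam \<rho> (\<lambda>m. PM m * W (e m) y) m)"
    by (simp add: sum_distrib_left sum.swap[of _ "UNIV::('m\<Rightarrow>'x) set"])
  also have "\<dots> \<le> (\<Sum>m\<in>UNIV. \<Sum>y\<in>UNIV. PM m powr lam * (c y * (A * c y) powr \<rho>))"
    using expectation_gallager_term_le[OF PM0 W0 \<rho>, where p = "embed_pmf PX"]
    unfolding Q_def A_def c_def pmf_embed_pmf_is_dist[OF PX] by (intro sum_mono) auto
  also have "\<dots> = (\<Sum>y\<in>UNIV. A * (c y * (A * c y) powr \<rho>))"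
    unfolding A_def sum_distrib_right by (rule sum.swap)
  also have "\<dots> = A powr (1 + \<rho>) * (\<Sum>y\<in>UNIV. c y powr (1 + \<rho>))"
    using A c by (simp add: powr_mult powr_mult_base[symmetric] sum_distrib_left mult_ac)
  finally show ?thesis unfolding lam_def A_def c_def .
qed

lemma exp_renyi_minus_I_up_eq:
  fixes PM :: "'m::finite \<Rightarrow> real" and W :: "'x::finite \<Rightarrow> 'y::finite \<Rightarrow> real"
    and PX :: "'x \<Rightarrow> real"
  assumes PM: "is_dist PM" and W: "is_channel W" and PX: "is_dist PX" and s: "0 < s" "s < 1"
  shows "exp ((s / (1 - s)) * (H_renyi s PM - I_up s PX W))
     = (\<Sum>m\<in>UNIV. PM m powr (1 - s)) powr (1 / (1 - s))
       * (\<Sum>y\<in>UNIV. (\<Sum>x\<in>UNIV. PX x * W x y powr (1 - s)) powr (1 / (1 - s)))"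
proof -
  define A where "A = (\<Sum>m\<in>UNIV. PM m powr (1 - s))"
  define c where "c y = (\<Sum>x\<in>UNIV. PX x * W x y powr (1 - s))" for y
  define B where "B = (\<Sum>y\<in>UNIV. c y powr (1 / (1 - s)))"
  obtain m0 where "0 < PM m0" using is_dist_ex_pos[OF PM] .
  then have "0 < A" unfolding A_def by (intro sum_pos2[of _ m0]) auto
  obtain x0 where x0: "0 < PX x0" using is_dist_ex_pos[OF PX] .
  obtain y0 where y0: "0 < W x0 y0" using is_dist_ex_pos W unfolding is_channel_def by blast
  have "0 < c y0"
    unfolding c_def using x0 y0 PX by (intro sum_pos2[of _ x0]) (auto simp: is_dist_def)
  then have "0 < B" unfolding B_def by (intro sum_pos2[of _ y0]) auto
  have "(s / (1 - s)) * (H_renyi s PM - I_up s PX W) = ln A / (1 - s) + ln B"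
    using s by (simp add: H_renyi_def I_up_def A_def B_def c_def field_simps)
  then have "exp ((s / (1 - s)) * (H_renyi s PM - I_up s PX W)) = A powr (1 / (1 - s)) * B"
    using \<open>0 < A\<close> \<open>0 < B\<close> by (simp add: exp_add powr_def)
  then show ?thesis unfolding A_def B_def c_def .
qed

theorem mainTheorem3:
  fixes PM :: "'m::finite \<Rightarrow> real"
    and W :: "'x::finite \<Rightarrow> 'y::finite \<Rightarrow> real"
    and PX :: "'x \<Rightarrow> real"
    and s :: real
  assumes "is_dist PM" and "is_channel W" and "is_dist PX"
    and "0 < s" and "s \<le> 1 / 2"
  shows "P_js PM W \<le> exp ((s / (1 - s)) * (H_renyi s PM - I_up s PX W))
       \<and> exp ((s / (1 - s)) * (H_renyi s PM - I_up s PX W))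
         = (\<Sum>m\<in>UNIV. PM m powr (1 - s)) powr (1 / (1 - s))
           * (\<Sum>y\<in>UNIV. (\<Sum>x\<in>UNIV. PX x * W x y powr (1 - s)) powr (1 / (1 - s)))"
proof -
  define \<rho> where "\<rho> = s / (1 - s)"
  have \<rho>: "0 < \<rho>" "\<rho> \<le> 1" and "1 / (1 + \<rho>) = 1 - s" and "1 + \<rho> = 1 / (1 - s)"
    using \<open>0 < s\<close> \<open>s \<le> 1 / 2\<close> by (auto simp: \<rho>_def field_simps)
  then have "P_js PM W \<le> (\<Sum>m\<in>UNIV. PM m powr (1 - s)) powr (1 / (1 - s))
      * (\<Sum>y\<in>UNIV. (\<Sum>x\<in>UNIV. PX x * W x y powr (1 - s)) powr (1 / (1 - s)))"
    using P_js_le_gallager_bound[OF assms(1-3) \<rho>] by simp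
  moreover have "exp ((s / (1 - s)) * (H_renyi s PM - I_up s PX W))
      = (\<Sum>m\<in>UNIV. PM m powr (1 - s)) powr (1 / (1 - s))
        * (\<Sum>y\<in>UNIV. (\<Sum>x\<in>UNIV. PX x * W x y powr (1 - s)) powr (1 / (1 - s)))"
    using assms by (intro exp_renyi_minus_I_up_eq) auto
  ultimately show ?thesis by simp
qed

end
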